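(* Let $q\in\mathbb{C}\setminus\{0\}$, fix a square root $q^{1/2}$, and let $H$ be the Hopf algebra generated by $X,g,g^{-1}$ with relations $gX=qXg$, $gg^{-1}=g^{-1}g=1$, coproduct $\Delta g=g\otimes g$, $\Delta X=X\otimes g^{-1}+g\otimes X$, counit $\epsilon(g)=1,\epsilon(X)=0$ (the elements $g^kX^m$, $k\in\mathbb{Z}$, $m\in\mathbb{Z}_{\ge0}$, form a basis). Define the linear functional $D_q:H\to\mathbb{C}$ by $D_q(g^kX^m)=\delta_{m,1}q^{k/2}$. Then for every $n\ge1$, $k\in\mathbb{Z}$, $m\ge 0$, the $n$-fold convolution power $D_q^n=D_q^{\otimes n}\circ\Delta^{n-1}$ satisfies \[D_q^n(g^kX^m)=\delta_{n,m}\,[[m]]_q!\;q^{km/2},\] where $[[m]]_q=q^{m-1}+q^{m-3}+\cdots+q^{1-m}$ and $[[m]]_q!=[[1]]_q[[2]]_q\cdots[[m]]_q$. Equivalently, for all $i,j\in\mathbb{Z}$, $D_q^n(g^iX^mg^j)=\delta_{n,m}[[m]]_q!\,q^{(i-j)m/2}$.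
   Context: $\Delta^{n-1}:H\to H^{\otimes n}$ denotes the iterated coproduct ($\Delta^0=\mathrm{id}$). *)

theory Defs
  imports Complex_Main
begin

text \<open>A basis element g^k X^m of H is encoded as the pair (k, m) :: int \<times> nat.
  A basis element of the n-fold tensor power H^{\<otimes> n} is a list of n such pairs.
  Elements of H (resp. of tensor powers) are represented as formal finite sums,
  i.e. lists of (coefficient, basis element) pairs; all maps below are defined on
  basis elements and extended linearly.\<close>

type_synonym hb = "int \<times> nat"

text \<open>Product of basis elements in H: since g X = q X g we have X g = q^{-1} g X,
  hence (g^a X^b)(g^c X^d) = q^{-bc} g^{a+c} X^{b+d}.\<close>
definition hmul :: "complex \<Rightarrow> hb \<Rightarrow> hb \<Rightarrow> complex \<times> hb" where
  "hmul q x y = (q powi (- (int (snd x) * fst y)), (fst x + fst y, snd x + snd y))"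

definition hprod :: "complex \<Rightarrow> (complex \<times> hb) list \<Rightarrow> (complex \<times> hb) list \<Rightarrow> (complex \<times> hb) list" where
  "hprod q u v = concat (map (\<lambda>(a, x). map (\<lambda>(b, y). (a * b * fst (hmul q x y), snd (hmul q x y))) v) u)"

fun tmul_b :: "complex \<Rightarrow> hb list \<Rightarrow> hb list \<Rightarrow> complex \<times> hb list" where
  "tmul_b q (x # xs) (y # ys) =
     (fst (hmul q x y) * fst (tmul_b q xs ys), snd (hmul q x y) # snd (tmul_b q xs ys))"
| "tmul_b q _ _ = (1, [])"

definition tmul :: "complex \<Rightarrow> (complex \<times> hb list) list \<Rightarrow> (complex \<times> hb list) list \<Rightarrow> (complex \<times> hb list) list" where
  "tmul q u v = concat (map (\<lambda>(a, s). map (\<lambda>(b, t). (a * b * fst (tmul_b q s t), snd (tmul_b q s t))) v) u)"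

fun tpow :: "complex \<Rightarrow> nat \<Rightarrow> (complex \<times> hb list) list \<Rightarrow> nat \<Rightarrow> (complex \<times> hb list) list" where
  "tpow q n u 0 = [(1, replicate n (0, 0))]"
| "tpow q n u (Suc m) = tmul q (tpow q n u m) u"

text \<open>Coproduct (algebra map determined by \<Delta> g = g \<otimes> g, \<Delta> X = X \<otimes> g^{-1} + g \<otimes> X):
  \<Delta>(g^k X^m) = (g \<otimes> g)^k (X \<otimes> g^{-1} + g \<otimes> X)^m.\<close>
definition coprod :: "complex \<Rightarrow> hb \<Rightarrow> (complex \<times> hb list) list" where
  "coprod q b = tmul q [(1, [(fst b, 0), (fst b, 0)])]
                       (tpow q 2 [(1, [(0, 1), (-1, 0)]), (1, [(1, 0), (0, 1)])] (snd b))"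

text \<open>Iterated coproduct \<Delta>^n : H \<rightarrow> H^{\<otimes>(n+1)}, \<Delta>^0 = id,
  \<Delta>^{n+1} = (\<Delta> \<otimes> id^{\<otimes> n}) \<circ> \<Delta>^n, applied to a basis element.\<close>
fun iter_coprod :: "complex \<Rightarrow> nat \<Rightarrow> hb \<Rightarrow> (complex \<times> hb list) list" where
  "iter_coprod q 0 b = [(1, [b])]"
| "iter_coprod q (Suc n) b =
     concat (map (\<lambda>(c, t). map (\<lambda>(d, u). (c * d, u @ tl t)) (coprod q (hd t))) (iter_coprod q n b))"

text \<open>The functional D_q(g^k X^m) = \<delta>_{m,1} q^{k/2}, where q^{1/2} = s is the fixed square root.\<close>
definition Dq :: "complex \<Rightarrow> hb \<Rightarrow> complex" where
  "Dq s b = (if snd b = 1 then s powi fst b else 0)"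

definition conv_pow :: "complex \<Rightarrow> complex \<Rightarrow> nat \<Rightarrow> hb \<Rightarrow> complex" where
  "conv_pow q s n b = (\<Sum>(c, t) \<leftarrow> iter_coprod q (n - 1) b. c * (\<Prod>x \<leftarrow> t. Dq s x))"

definition conv_pow_lin :: "complex \<Rightarrow> complex \<Rightarrow> nat \<Rightarrow> (complex \<times> hb) list \<Rightarrow> complex" where
  "conv_pow_lin q s n u = (\<Sum>(c, b) \<leftarrow> u. c * conv_pow q s n b)"

definition qint :: "complex \<Rightarrow> nat \<Rightarrow> complex" where
  "qint q j = (\<Sum>i<j. q powi (int j - 1 - 2 * int i))"

definition qfact :: "complex \<Rightarrow> nat \<Rightarrow> complex" where
  "qfact q m = (\<Prod>j = 1..m. qint q j)"

end

theory Submission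
  imports Defs
begin

text \<open>Since D_q^{n+1} = (D_q^n \<otimes> D_q) \<circ> \<Delta>, it suffices to show that the functionals
  \<phi>_p(g^k X^m) = \<delta>_{m,p} q^{kp/2}, of which D_q = \<phi>_1 is one, satisfy
  (\<phi>_p \<otimes> D_q) \<circ> \<Delta> = [[p+1]]_q \<phi>_{p+1}.
  In \<Delta>(g^k X^m) = (g^k \<otimes> g^k)(X \<otimes> g^{-1} + g \<otimes> X)^m only the words containing g \<otimes> X
  exactly once survive D_q in the second factor, and \<phi>_p then forces m = p + 1.
  Commuting the X's past the g's, the word with g \<otimes> X in position i + 1 contributes
  q^{m-1-2i} q^{km/2}, and these sum to [[m]]_q q^{km/2}.\<close>

definition lin_ext :: "('a \<Rightarrow> complex) \<Rightarrow> (complex \<times> 'a) list \<Rightarrow> complex" where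
  "lin_ext f w = (\<Sum>(c, t) \<leftarrow> w. c * f t)"

lemma lin_ext_Nil [simp]: "lin_ext f [] = 0"
  by (simp add: lin_ext_def)

lemma lin_ext_Cons [simp]: "lin_ext f ((c, t) # w) = c * f t + lin_ext f w"
  by (simp add: lin_ext_def)

lemma lin_ext_append [simp]: "lin_ext f (u @ v) = lin_ext f u + lin_ext f v"
  by (simp add: lin_ext_def)

lemma lin_ext_cong: "(\<And>c t. (c, t) \<in> set w \<Longrightarrow> f t = g t) \<Longrightarrow> lin_ext f w = lin_ext g w"
  unfolding lin_ext_def by (intro arg_cong[where f = sum_list] map_cong) auto

lemma lin_ext_scale_left: "lin_ext (\<lambda>t. a * f t) w = a * lin_ext f w"
  by (induction w) (auto simp: algebra_simps)

lemma lin_ext_scale_right: "lin_ext (\<lambda>t. f t * a) w = lin_ext f w * a"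
  by (induction w) (auto simp: algebra_simps)

lemma lin_ext_map: "lin_ext f (map (\<lambda>(b, t). (a * b * h t, g t)) v) = a * lin_ext (\<lambda>t. h t * f (g t)) v"
  by (induction v) (auto simp: algebra_simps)

lemma lin_ext_tmul:
  "lin_ext f (tmul q u v) =
     lin_ext (\<lambda>s. lin_ext (\<lambda>t. fst (tmul_b q s t) * f (snd (tmul_b q s t))) v) u"
  by (induction u) (auto simp: tmul_def lin_ext_map)

lemma lin_ext_map_scaled: "lin_ext f (map (\<lambda>(d, u). (c * d, g u)) v) = c * lin_ext (\<lambda>u. f (g u)) v"
  by (induction v) (auto simp: algebra_simps)

lemma lin_ext_concat_map:
  "lin_ext f (concat (map (\<lambda>(c, t). map (\<lambda>(d, u). (c * d, G t u)) (H t)) w)) =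
     lin_ext (\<lambda>t. lin_ext (\<lambda>u. f (G t u)) (H t)) w"
  by (induction w) (auto simp: lin_ext_map_scaled)

lemma length_tmul_b: "length (snd (tmul_b q s t)) = min (length s) (length t)"
  by (induction q s t rule: tmul_b.induct) auto

lemma length_in_tmul:
  assumes "(c, t) \<in> set (tmul q u v)"
    and "\<forall>(a, r) \<in> set u. length r = n" and "\<forall>(b, r) \<in> set v. length r = n"
  shows "length t = n"
  using assms by (fastforce simp: tmul_def length_tmul_b)

definition DeltaX :: "(complex \<times> hb list) list" where
  "DeltaX = [(1, [(0, 1), (-1, 0)]), (1, [(1, 0), (0, 1)])]"

lemma coprod_eq_tmul_tpow: "coprod q (k, m) = tmul q [(1, [(k, 0), (k, 0)])] (tpow q 2 DeltaX m)"
  by (simp add: coprod_def DeltaX_def)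

lemma length_in_tpow_DeltaX: "(c, t) \<in> set (tpow q 2 DeltaX m) \<Longrightarrow> length t = 2"
proof (induction m arbitrary: c t)
  case (Suc m)
  then have "(c, t) \<in> set (tmul q (tpow q 2 DeltaX m) DeltaX)"
    by simp
  then show ?case
    by (rule length_in_tmul) (auto simp: Suc.IH DeltaX_def)
qed simp

lemma length_in_coprod: "(c, t) \<in> set (coprod q b) \<Longrightarrow> length t = 2"
  by (cases b) (auto simp: coprod_eq_tmul_tpow intro: length_in_tmul length_in_tpow_DeltaX)

lemma length_in_iter_coprod: "(c, t) \<in> set (iter_coprod q j b) \<Longrightarrow> length t = Suc j"
proof (induction j arbitrary: c t)
  case (Suc j)
  then show ?case
    by (force dest: length_in_coprod)
qed simp

lemma length_2_cases:
  assumes "length t = 2"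
  obtains x y where "t = [x, y]"
  using assms by (auto simp: numeral_2_eq_2 length_Suc_conv)

text \<open>A functional F on H \<otimes> H, given on pure tensors of basis elements, composed with
  right multiplication by \<Delta> X = X \<otimes> g^{-1} + g \<otimes> X.\<close>
definition mul_DeltaX :: "complex \<Rightarrow> (hb \<Rightarrow> hb \<Rightarrow> complex) \<Rightarrow> hb \<Rightarrow> hb \<Rightarrow> complex" where
  "mul_DeltaX q F x y =
     q powi int (snd y) * F (fst x, snd x + 1) (fst y - 1, snd y)
   + q powi - int (snd x) * F (fst x + 1, snd x) (fst y, snd y + 1)"

lemma lin_ext_tpow_DeltaX:
  "lin_ext (\<lambda>t. F (t ! 0) (t ! 1)) (tpow q 2 DeltaX m) = (mul_DeltaX q ^^ m) F (0, 0) (0, 0)"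
proof (induction m arbitrary: F)
  case 0
  then show ?case
    by (simp add: numeral_2_eq_2)
next
  case (Suc m)
  have "lin_ext (\<lambda>t. F (t ! 0) (t ! 1)) (tpow q 2 DeltaX (Suc m))
      = lin_ext (\<lambda>t. mul_DeltaX q F (t ! 0) (t ! 1)) (tpow q 2 DeltaX m)"
    unfolding tpow.simps lin_ext_tmul
    by (rule lin_ext_cong, erule length_in_tpow_DeltaX[THEN length_2_cases])
      (simp add: DeltaX_def mul_DeltaX_def hmul_def)
  also have "\<dots> = (mul_DeltaX q ^^ Suc m) F (0, 0) (0, 0)"
    by (metis Suc.IH comp_apply funpow_Suc_right)
  finally show ?case .
qed

lemma lin_ext_coprod:
  "lin_ext (\<lambda>t. F (t ! 0) (t ! 1)) (coprod q (k, m))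
     = (mul_DeltaX q ^^ m) (\<lambda>x y. F (k + fst x, snd x) (k + fst y, snd y)) (0, 0) (0, 0)"
proof -
  have "lin_ext (\<lambda>t. F (t ! 0) (t ! 1)) (coprod q (k, m))
      = lin_ext (\<lambda>t. F (k + fst (t ! 0), snd (t ! 0)) (k + fst (t ! 1), snd (t ! 1))) (tpow q 2 DeltaX m)"
    unfolding coprod_eq_tmul_tpow lin_ext_tmul lin_ext_Cons lin_ext_Nil mult_1 add_0_right
    by (rule lin_ext_cong, erule length_in_tpow_DeltaX[THEN length_2_cases]) (simp add: hmul_def)
  also have "\<dots> = (mul_DeltaX q ^^ m) (\<lambda>x y. F (k + fst x, snd x) (k + fst y, snd y)) (0, 0) (0, 0)"
    by (rule lin_ext_tpow_DeltaX)
  finally show ?thesis .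
qed

definition deg_functional :: "complex \<Rightarrow> nat \<Rightarrow> hb \<Rightarrow> complex" where
  "deg_functional s p b = (if snd b = p then s powi (fst b * int p) else 0)"

lemma Dq_eq_deg_functional: "Dq s = deg_functional s 1"
  by (simp add: fun_eq_iff Dq_def deg_functional_def)

lemma power2_power_int: "(x\<^sup>2) powi n = x powi (2 * n)"
  for x :: "'a :: division_ring"
  by (simp add: power_int_mult)

text \<open>The value of (\<phi>_p \<otimes> D_q)((g^a X^b \<otimes> g^c X^d) (\<Delta> X)^m), where \<phi>_p = deg_functional s p:
  D_q needs exactly one X in the second factor, so either d = 1 and every factor X \<otimes> g^{-1}
  is chosen, or d = 0 and g \<otimes> X is chosen once, at any of the m positions.\<close>
fun pairing_DeltaX_pow :: "complex \<Rightarrow> nat \<Rightarrow> nat \<Rightarrow> hb \<Rightarrow> hb \<Rightarrow> complex" where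
  "pairing_DeltaX_pow s p m (a, b) (c, d) =
    (if d = 1 \<and> b + m = p then s powi (a * int p + c + int m)
     else if d = 0 \<and> b + m = p + 1 then
       s powi ((a + 1) * int p + c + 1 - int m) * (\<Sum>i<m. s powi (2 * (int m - 1 - int b - 2 * int i)))
     else 0)"

lemma mul_DeltaX_pairing_DeltaX_pow:
  assumes "s \<noteq> 0"
  shows "mul_DeltaX (s\<^sup>2) (pairing_DeltaX_pow s p m) (a, b) (c, d) = pairing_DeltaX_pow s p (Suc m) (a, b) (c, d)"
proof -
  have sq_mult: "s\<^sup>2 * s powi z = s powi (z + 2)" for z
    using assms by (simp add: power_int_add)
  consider (no_X) "d = 0" | (one_X) "d = 1" | (more_X) "d \<ge> 2"
    by linarith
  then show ?thesis
  proof cases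
    case no_X
    have "(\<Sum>i<Suc m. s powi (2 * (int (Suc m) - 1 - int b - 2 * int i)))
        = s powi (2 * (int m - int b)) + (\<Sum>i<m. s powi (2 * (int m - 1 - int (Suc b) - 2 * int i)))"
      unfolding sum.lessThan_Suc_shift by (simp add: algebra_simps)
    then show ?thesis
      using no_X assms
      by (auto simp: mul_DeltaX_def power2_power_int power_int_add[symmetric] distrib_left algebra_simps)
  next
    case one_X
    then show ?thesis
      by (auto simp: mul_DeltaX_def sq_mult algebra_simps)
  next
    case more_X
    then show ?thesis
      by (simp add: mul_DeltaX_def)
  qed
qed

lemma funpow_mul_DeltaX_pairing:
  assumes "s \<noteq> 0"
  shows "(mul_DeltaX (s\<^sup>2) ^^ m) (\<lambda>x y. deg_functional s p x * Dq s y) = pairing_DeltaX_pow s p m"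
proof (induction m)
  case 0
  have "deg_functional s p (a, b) * Dq s (c, d) = pairing_DeltaX_pow s p 0 (a, b) (c, d)" for a b c d
    using assms by (simp add: deg_functional_def Dq_def power_int_add)
  then show ?case
    by (simp add: fun_eq_iff)
next
  case (Suc m)
  have "mul_DeltaX (s\<^sup>2) (pairing_DeltaX_pow s p m) = pairing_DeltaX_pow s p (Suc m)"
    using mul_DeltaX_pairing_DeltaX_pow[OF assms]
    by (simp add: fun_eq_iff split_paired_all del: pairing_DeltaX_pow.simps)
  with Suc.IH show ?case
    by simp
qed

lemma funpow_mul_DeltaX_scale:
  "(mul_DeltaX q ^^ m) (\<lambda>x y. a * F x y) = (\<lambda>x y. a * (mul_DeltaX q ^^ m) F x y)"
  by (induction m) (simp_all add: mul_DeltaX_def fun_eq_iff algebra_simps)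

definition conv_Dq :: "complex \<Rightarrow> complex \<Rightarrow> (hb \<Rightarrow> complex) \<Rightarrow> hb \<Rightarrow> complex" where
  "conv_Dq q s \<phi> b = lin_ext (\<lambda>t. \<phi> (t ! 0) * Dq s (t ! 1)) (coprod q b)"

lemma conv_Dq_scale: "conv_Dq q s (\<lambda>b. a * \<phi> b) = (\<lambda>b. a * conv_Dq q s \<phi> b)"
  by (simp add: fun_eq_iff conv_Dq_def mult.assoc lin_ext_scale_left)

lemma conv_Dq_deg_functional:
  assumes "s \<noteq> 0" and "q = s\<^sup>2"
  shows "conv_Dq q s (deg_functional s p) = (\<lambda>b. qint q (Suc p) * deg_functional s (Suc p) b)"
proof
  fix b :: hb
  obtain k m where b: "b = (k, m)"
    by fastforce
  have shift: "deg_functional s p (k + a, b) * Dq s (k + c, d)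
      = s powi (k * int (Suc p)) * (deg_functional s p (a, b) * Dq s (c, d))" for a b c d
    using assms(1) by (simp add: deg_functional_def Dq_def power_int_add algebra_simps)
  have "conv_Dq q s (deg_functional s p) (k, m)
      = (mul_DeltaX q ^^ m) (\<lambda>x y. deg_functional s p (k + fst x, snd x) * Dq s (k + fst y, snd y)) (0, 0) (0, 0)"
    unfolding conv_Dq_def by (rule lin_ext_coprod)
  also have "\<dots> = s powi (k * int (Suc p)) * pairing_DeltaX_pow s p m (0, 0) (0, 0)"
    using shift funpow_mul_DeltaX_scale funpow_mul_DeltaX_pairing[OF assms(1)] assms(2) by simp
  also have "\<dots> = qint q (Suc p) * deg_functional s (Suc p) (k, m)"
  proof (cases "m = Suc p")
    case True
    have "qint q m = (\<Sum>i<m. s powi (2 * (int m - 1 - 2 * int i)))"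
      unfolding qint_def assms(2) power2_power_int by (simp add: algebra_simps)
    then show ?thesis
      using True by (simp add: deg_functional_def algebra_simps)
  qed (simp add: deg_functional_def)
  finally show "conv_Dq q s (deg_functional s p) b = qint q (Suc p) * deg_functional s (Suc p) b"
    by (simp add: b)
qed

lemma lin_ext_iter_coprod:
  "lin_ext (\<lambda>t. \<phi> (hd t) * prod_list (map (Dq s) (tl t))) (iter_coprod q j b) = (conv_Dq q s ^^ j) \<phi> b"
proof (induction j arbitrary: \<phi>)
  case (Suc j)
  have "lin_ext (\<lambda>t. \<phi> (hd t) * prod_list (map (Dq s) (tl t))) (iter_coprod q (Suc j) b)
      = lin_ext (\<lambda>t. lin_ext (\<lambda>u. \<phi> (hd (u @ tl t)) * prod_list (map (Dq s) (tl (u @ tl t))))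
                        (coprod q (hd t))) (iter_coprod q j b)"
    by (simp only: iter_coprod.simps lin_ext_concat_map)
  also have "\<dots> = lin_ext (\<lambda>t. conv_Dq q s \<phi> (hd t) * prod_list (map (Dq s) (tl t))) (iter_coprod q j b)"
    unfolding conv_Dq_def lin_ext_scale_right[symmetric]
    by (rule lin_ext_cong, rule lin_ext_cong, erule length_in_coprod[THEN length_2_cases])
      (simp add: mult.assoc)
  also have "\<dots> = (conv_Dq q s ^^ Suc j) \<phi> b"
    by (metis Suc.IH comp_apply funpow_Suc_right)
  finally show ?case .
qed simp

lemma conv_pow_eq_funpow_conv_Dq: "conv_pow q s n b = (conv_Dq q s ^^ (n - 1)) (Dq s) b"
proof -
  have "conv_pow q s n b = lin_ext (\<lambda>t. prod_list (map (Dq s) t)) (iter_coprod q (n - 1) b)"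
    by (simp add: conv_pow_def lin_ext_def)
  also have "\<dots> = lin_ext (\<lambda>t. Dq s (hd t) * prod_list (map (Dq s) (tl t))) (iter_coprod q (n - 1) b)"
  proof (intro lin_ext_cong)
    fix c t
    assume "(c, t) \<in> set (iter_coprod q (n - 1) b)"
    then have "t \<noteq> []"
      using length_in_iter_coprod by fastforce
    then show "prod_list (map (Dq s) t) = Dq s (hd t) * prod_list (map (Dq s) (tl t))"
      by (cases t) simp_all
  qed
  also have "\<dots> = (conv_Dq q s ^^ (n - 1)) (Dq s) b"
    by (rule lin_ext_iter_coprod)
  finally show ?thesis .
qed

lemma funpow_conv_Dq_Dq:
  assumes "s \<noteq> 0" and "q = s\<^sup>2"
  shows "(conv_Dq q s ^^ j) (Dq s) = (\<lambda>b. qfact q (Suc j) * deg_functional s (Suc j) b)"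
proof (induction j)
  case 0
  show ?case
    by (simp add: Dq_eq_deg_functional qfact_def qint_def)
next
  case (Suc j)
  have "qfact q (Suc (Suc j)) = qfact q (Suc j) * qint q (Suc (Suc j))"
    by (simp add: qfact_def)
  then show ?case
    using Suc by (simp add: conv_Dq_scale conv_Dq_deg_functional[OF assms] mult.assoc)
qed

lemma conv_pow_closed_form:
  assumes "s \<noteq> 0" and "q = s\<^sup>2" and "n \<ge> 1"
  shows "conv_pow q s n (k, m) = (if n = m then qfact q m * s powi (k * int m) else 0)"
  using assms by (simp add: conv_pow_eq_funpow_conv_Dq funpow_conv_Dq_Dq deg_functional_def)

theorem mainTheorem2:
  fixes q s :: complex and n :: nat
  assumes "q \<noteq> 0" and "s ^ 2 = q" and "n \<ge> 1"
  shows "(\<forall>(k::int) (m::nat). conv_pow q s n (k, m) =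
            (if n = m then qfact q m * s powi (k * int m) else 0))
       \<and> (\<forall>(i::int) (j::int) (m::nat).
            conv_pow_lin q s n (hprod q (hprod q [(1, (i, 0))] [(1, (0, m))]) [(1, (j, 0))]) =
            (if n = m then qfact q m * s powi ((i - j) * int m) else 0))"
proof -
  have s: "s \<noteq> 0" and q: "q = s\<^sup>2"
    using assms by auto
  have basis: "conv_pow q s n (k, m) = (if n = m then qfact q m * s powi (k * int m) else 0)"
    for k m
    using conv_pow_closed_form[OF s q assms(3)] .
  moreover have "conv_pow_lin q s n (hprod q (hprod q [(1, (i, 0))] [(1, (0, m))]) [(1, (j, 0))]) =
      (if n = m then qfact q m * s powi ((i - j) * int m) else 0)" for i j m
  proof -
    have "hprod q (hprod q [(1, (i, 0))] [(1, (0, m))]) [(1, (j, 0))] = [(q powi - (int m * j), (i + j, m))]"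
      by (simp add: hprod_def hmul_def)
    moreover have "q powi - (int m * j) * s powi ((i + j) * int m) = s powi ((i - j) * int m)"
      using s by (simp add: q power2_power_int power_int_add[symmetric] algebra_simps)
    ultimately show ?thesis
      by (simp add: conv_pow_lin_def basis mult.assoc mult.left_commute)
  qed
  ultimately show ?thesis
    by blast
qed

end
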